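(* Let $\mathbf S_1,\dots,\mathbf S_n$ be nice subcategories of shrinkings. Then for every pointed digraph $(G,g)$ and $n\ge0$ the canonical map $$\mathrm{colim}_{(J_1,\dots,J_n)\in\mathbf S_1^{\mathrm{op}}\times\dots\times\mathbf S_n^{\mathrm{op}}}\Big[\bigotimes_{i=1}^n(J_i,\partial J_i),(G,g)\Big]\longrightarrow A_n(G,g)$$ is a bijection. Likewise, for a single nice subcategory $\mathbf S$, the canonical map $\mathrm{colim}_{J\in\mathbf S^{\mathrm{op}}}[(J,\partial J)^{\otimes n},(G,g)]\to A_n(G,g)$ is a bijection.
   Context: Digraphs: vertex sets with arrows $E\subseteq V^2$ containing the diagonal; digraph maps preserve arrows. Box product $G\otimes H$: arrow $(g,h)\to(g',h')$ iff ($g\to g'$, $h=h'$) or ($g=g'$, $h\to h'$). An interval is a digraph on $\{0,\dots,k\}$ whose non-degenerate arrows are exactly one of $i\to i+1$, $i+1\to i$ for each $i<k$; $\partial J=\{0,k\}$. A shrinking is a digraph map of intervals surjective and monotone on vertices; $\mathsf{Shr}$ is the category of all intervals and shrinkings. A nice subcategory of shrinkings is a (not necessarily full) subcategory $\mathbf S\subseteq\mathsf{Shr}$ such that (1) for every interval $J$ there is $J'\in\mathbf S$ and a shrinking $J'\to J$; (2) for $J,J'\in\mathbf S$, if there exists a shrinking $J'\to J$ then there exists a morphism $J'\to J$ in $\mathbf S$. Pairs $(G,H)$ ($H$ an induced subdigraph), maps of pairs, $(G,H)\otimes(G',H')=(G\otimes G',G\otimes H'\cup H\otimes G')$; two pair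 maps are homotopic rel $H$ if joined by a chain of pair maps agreeing on $H$ where consecutive maps satisfy $\varphi_t(x)\to\varphi_{t+1}(x)$ for all $x$ or the reverse for all $x$; $[-,-]$ denotes classes; $(G,g)=(G,\{g\})$. $A_n(G,g)=\mathrm{colim}_{(J_1,\dots,J_n)\in(\mathsf{Shr}^{\mathrm{op}})^n}[\bigotimes_i(J_i,\partial J_i),(G,g)]$, with functoriality by precomposition. *)

theory Defs
  imports "HOL-Library.FuncSet"
begin

type_synonym 'a digraph = "'a set \<times> ('a \<times> 'a) set"

definition is_digraph :: "'a digraph \<Rightarrow> bool" where
  "is_digraph G \<longleftrightarrow> snd G \<subseteq> fst G \<times> fst G \<and> (\<forall>x\<in>fst G. (x, x) \<in> snd G)"

definition dmap :: "'a digraph \<Rightarrow> 'b digraph \<Rightarrow> ('a \<Rightarrow> 'b) \<Rightarrow> bool" where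
  "dmap G H f \<longleftrightarrow> (\<forall>x\<in>fst G. f x \<in> fst H) \<and> (\<forall>(x, y)\<in>snd G. (f x, f y) \<in> snd H)"

text \<open>An interval on vertices 0..k is encoded by a list J of length k:
  J!i = True means the arrow i -> i+1, J!i = False means i+1 -> i.\<close>
type_synonym interval = "bool list"

definition ivl :: "interval \<Rightarrow> nat digraph" where
  "ivl J = ({0..length J},
     {(i, i) | i. i \<le> length J} \<union> {(i, Suc i) | i. i < length J \<and> J ! i}
     \<union> {(Suc i, i) | i. i < length J \<and> \<not> J ! i})"

definition ivl_bd :: "interval \<Rightarrow> nat set" where
  "ivl_bd J = {0, length J}"

definition shrinking :: "interval \<Rightarrow> interval \<Rightarrow> (nat \<Rightarrow> nat) \<Rightarrow> bool" where
  "shrinking J' J f \<longleftrightarrow> f \<in> extensional {0..length J'} \<and> dmap (ivl J') (ivl J) f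
     \<and> f ` {0..length J'} = {0..length J} \<and> mono_on {0..length J'} f"

text \<open>A morphism is a triple (source, target, function).\<close>
type_synonym shr = "interval \<times> interval \<times> (nat \<Rightarrow> nat)"

type_synonym cat = "interval set \<times> shr set"

definition shr_id :: "interval \<Rightarrow> shr" where
  "shr_id J = (J, J, restrict id {0..length J})"

text \<open>Composition: first m, then m'.\<close>
definition shr_comp :: "shr \<Rightarrow> shr \<Rightarrow> shr" where
  "shr_comp m m' = (fst m, fst (snd m'), restrict (snd (snd m') \<circ> snd (snd m)) {0..length (fst m)})"

definition Shr :: cat where
  "Shr = (UNIV, {(J', J, f). shrinking J' J f})"

definition subcat_of_Shr :: "cat \<Rightarrow> bool" where
  "subcat_of_Shr S \<longleftrightarrow> snd S \<subseteq> snd Shr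
     \<and> (\<forall>m\<in>snd S. fst m \<in> fst S \<and> fst (snd m) \<in> fst S)
     \<and> (\<forall>J\<in>fst S. shr_id J \<in> snd S)
     \<and> (\<forall>m\<in>snd S. \<forall>m'\<in>snd S. fst m' = fst (snd m) \<longrightarrow> shr_comp m m' \<in> snd S)"

definition nice_subcat :: "cat \<Rightarrow> bool" where
  "nice_subcat S \<longleftrightarrow> subcat_of_Shr S
     \<and> (\<forall>J. \<exists>J'\<in>fst S. \<exists>f. shrinking J' J f)
     \<and> (\<forall>J\<in>fst S. \<forall>J'\<in>fst S. (\<exists>f. shrinking J' J f) \<longrightarrow> (\<exists>f. (J', J, f) \<in> snd S))"

definition tverts :: "interval list \<Rightarrow> nat list set" where
  "tverts Js = {xs. length xs = length Js \<and> (\<forall>i<length Js. xs ! i \<le> length (Js ! i))}"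

definition tarrows :: "interval list \<Rightarrow> (nat list \<times> nat list) set" where
  "tarrows Js = {(xs, ys). xs \<in> tverts Js \<and> ys \<in> tverts Js \<and>
     (xs = ys \<or> (\<exists>i<length Js. (\<forall>j<length Js. j \<noteq> i \<longrightarrow> xs ! j = ys ! j)
                   \<and> (xs ! i, ys ! i) \<in> snd (ivl (Js ! i))))}"

definition tgraph :: "interval list \<Rightarrow> nat list digraph" where
  "tgraph Js = (tverts Js, tarrows Js)"

definition tbd :: "interval list \<Rightarrow> nat list set" where
  "tbd Js = {xs \<in> tverts Js. \<exists>i<length Js. xs ! i \<in> ivl_bd (Js ! i)}"

definition pmap :: "interval list \<Rightarrow> 'a digraph \<Rightarrow> 'a \<Rightarrow> (nat list \<Rightarrow> 'a) \<Rightarrow> bool" where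
  "pmap Js G g \<phi> \<longleftrightarrow> \<phi> \<in> extensional (tverts Js) \<and> dmap (tgraph Js) G \<phi> \<and> (\<forall>x\<in>tbd Js. \<phi> x = g)"

definition htpy1 :: "interval list \<Rightarrow> 'a digraph \<Rightarrow> 'a \<Rightarrow> ((nat list \<Rightarrow> 'a) \<times> (nat list \<Rightarrow> 'a)) set" where
  "htpy1 Js G g = {(\<phi>, \<psi>). pmap Js G g \<phi> \<and> pmap Js G g \<psi> \<and> (\<forall>x\<in>tbd Js. \<phi> x = \<psi> x)
     \<and> ((\<forall>x\<in>tverts Js. (\<phi> x, \<psi> x) \<in> snd G) \<or> (\<forall>x\<in>tverts Js. (\<psi> x, \<phi> x) \<in> snd G))}"

definition htpy :: "interval list \<Rightarrow> 'a digraph \<Rightarrow> 'a \<Rightarrow> ((nat list \<Rightarrow> 'a) \<times> (nat list \<Rightarrow> 'a)) set" where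
  "htpy Js G g = (htpy1 Js G g)\<^sup>*"

definition hset :: "interval list \<Rightarrow> 'a digraph \<Rightarrow> 'a \<Rightarrow> (nat list \<Rightarrow> 'a) set set" where
  "hset Js G g = {\<phi>. pmap Js G g \<phi>} // htpy Js G g"

definition tmap :: "(nat \<Rightarrow> nat) list \<Rightarrow> nat list \<Rightarrow> nat list" where
  "tmap fs xs = map (\<lambda>i. (fs ! i) (xs ! i)) [0..<length xs]"

definition precomp :: "'a digraph \<Rightarrow> 'a \<Rightarrow> interval list \<Rightarrow> (nat \<Rightarrow> nat) list
    \<Rightarrow> (nat list \<Rightarrow> 'a) set \<Rightarrow> (nat list \<Rightarrow> 'a) set" where
  "precomp G g Js' fs c = {\<psi>. \<exists>\<phi>\<in>c. (restrict (\<phi> \<circ> tmap fs) (tverts Js'), \<psi>) \<in> htpy Js' G g}"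

text \<open>Colimit over S_1^op x ... x S_n^op (Ss = [S_1,...,S_n]) of the set-valued functor,
  as the disjoint union modulo the equivalence relation generated by the functor's action.\<close>
definition pobjs :: "cat list \<Rightarrow> interval list set" where
  "pobjs Ss = {Js. length Js = length Ss \<and> (\<forall>i<length Ss. Js ! i \<in> fst (Ss ! i))}"

definition pcarrier :: "cat list \<Rightarrow> 'a digraph \<Rightarrow> 'a \<Rightarrow> (interval list \<times> (nat list \<Rightarrow> 'a) set) set" where
  "pcarrier Ss G g = {(Js, c). Js \<in> pobjs Ss \<and> c \<in> hset Js G g}"

definition pgen :: "cat list \<Rightarrow> 'a digraph \<Rightarrow> 'a
    \<Rightarrow> ((interval list \<times> (nat list \<Rightarrow> 'a) set) \<times> (interval list \<times> (nat list \<Rightarrow> 'a) set)) set" where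
  "pgen Ss G g = {((Js, c), (Js', precomp G g Js' (map (\<lambda>m. snd (snd m)) ms) c)) | Js Js' c ms.
     Js \<in> pobjs Ss \<and> Js' \<in> pobjs Ss \<and> c \<in> hset Js G g \<and> length ms = length Ss \<and>
     (\<forall>i<length Ss. ms ! i \<in> snd (Ss ! i) \<and> fst (ms ! i) = Js' ! i \<and> fst (snd (ms ! i)) = Js ! i)}"

definition prel :: "cat list \<Rightarrow> 'a digraph \<Rightarrow> 'a
    \<Rightarrow> ((interval list \<times> (nat list \<Rightarrow> 'a) set) \<times> (interval list \<times> (nat list \<Rightarrow> 'a) set)) set" where
  "prel Ss G g = (pgen Ss G g \<union> (pgen Ss G g)\<inverse>)\<^sup>*"

definition pcolim :: "cat list \<Rightarrow> 'a digraph \<Rightarrow> 'a \<Rightarrow> (interval list \<times> (nat list \<Rightarrow> 'a) set) set set" where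
  "pcolim Ss G g = pcarrier Ss G g // prel Ss G g"

definition A :: "nat \<Rightarrow> 'a digraph \<Rightarrow> 'a \<Rightarrow> (interval list \<times> (nat list \<Rightarrow> 'a) set) set set" where
  "A n G g = pcolim (replicate n Shr) G g"

text \<open>Canonical map induced by the inclusion S_1 x ... x S_n into Shr^n.\<close>
definition pcan :: "cat list \<Rightarrow> 'a digraph \<Rightarrow> 'a
    \<Rightarrow> (interval list \<times> (nat list \<Rightarrow> 'a) set) set \<Rightarrow> (interval list \<times> (nat list \<Rightarrow> 'a) set) set" where
  "pcan Ss G g X = prel (replicate (length Ss) Shr) G g `` X"

text \<open>Colimit over S^op of J |-> [ (J, dJ)^(tensor n), (G, g) ].\<close>
definition dcarrier :: "cat \<Rightarrow> nat \<Rightarrow> 'a digraph \<Rightarrow> 'a \<Rightarrow> (interval \<times> (nat list \<Rightarrow> 'a) set) set" where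
  "dcarrier S n G g = {(J, c). J \<in> fst S \<and> c \<in> hset (replicate n J) G g}"

definition dgen :: "cat \<Rightarrow> nat \<Rightarrow> 'a digraph \<Rightarrow> 'a
    \<Rightarrow> ((interval \<times> (nat list \<Rightarrow> 'a) set) \<times> (interval \<times> (nat list \<Rightarrow> 'a) set)) set" where
  "dgen S n G g = {((J, c), (J', precomp G g (replicate n J') (replicate n f) c)) | J J' f c.
     J \<in> fst S \<and> J' \<in> fst S \<and> (J', J, f) \<in> snd S \<and> c \<in> hset (replicate n J) G g}"

definition dcolim :: "cat \<Rightarrow> nat \<Rightarrow> 'a digraph \<Rightarrow> 'a \<Rightarrow> (interval \<times> (nat list \<Rightarrow> 'a) set) set set" where
  "dcolim S n G g = dcarrier S n G g // (dgen S n G g \<union> (dgen S n G g)\<inverse>)\<^sup>*"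

text \<open>Canonical map induced by the diagonal S^op -> (Shr^op)^n.\<close>
definition dcan :: "nat \<Rightarrow> 'a digraph \<Rightarrow> 'a
    \<Rightarrow> (interval \<times> (nat list \<Rightarrow> 'a) set) set \<Rightarrow> (interval list \<times> (nat list \<Rightarrow> 'a) set) set" where
  "dcan n G g X = prel (replicate n Shr) G g `` ((\<lambda>(J, c). (replicate n J, c)) ` X)"

end

theory Submission
  imports Defs
begin

(* Any two shrinkings J' -> J are connected by a zigzag of shrinkings in which consecutive maps
   are pointwise joined by arrows of J pointing the same way: both lie above their pointwise
   minimum, and a shrinking lying above another one can be lowered by one level on a block.
   Precomposition turns such a zigzag into a homotopy rel boundary, so on homotopy classes
   precomposition with a box product of shrinkings depends only on its source and target.
   Hence two elements of A_n agree iff they agree after precomposition to a common refinement,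
   which exists because a concatenation of intervals shrinks onto each factor.  A nice
   subcategory contains a refinement of every interval and realises every shrinking between its
   objects by a morphism, so refinements can be chosen inside the S_i: this gives injectivity,
   and surjectivity comes from the refinements themselves. *)

lemma fst_ivl [simp]: "fst (ivl J) = {0..length J}"
  unfolding ivl_def by simp

lemma ivl_arrow_iff:
  "(a, b) \<in> snd (ivl J) \<longleftrightarrow>
     (a = b \<and> a \<le> length J) \<or> (b = Suc a \<and> a < length J \<and> J ! a) \<or> (a = Suc b \<and> b < length J \<and> \<not> J ! b)"
  unfolding ivl_def by auto

lemma ivl_arrow_refl: "a \<le> length J \<Longrightarrow> (a, a) \<in> snd (ivl J)"
  by (simp add: ivl_arrow_iff)

lemma dmap_ivl_iff:
  "dmap (ivl J') (ivl J) f \<longleftrightarrow> (\<forall>x\<le>length J'. f x \<le> length J) \<and>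
     (\<forall>y<length J'. if J' ! y then (f y, f (Suc y)) \<in> snd (ivl J) else (f (Suc y), f y) \<in> snd (ivl J))"
  (is "_ \<longleftrightarrow> ?le \<and> ?arr")
proof
  assume "dmap (ivl J') (ivl J) f"
  then show "?le \<and> ?arr" unfolding dmap_def by (auto simp: ivl_arrow_iff)
next
  assume "?le \<and> ?arr"
  then show "dmap (ivl J') (ivl J) f"
    unfolding dmap_def by (auto simp: ivl_arrow_iff split: if_splits)
qed

text \<open>Shrinkings without the extensionality condition.\<close>
definition shrinks :: "interval \<Rightarrow> interval \<Rightarrow> (nat \<Rightarrow> nat) \<Rightarrow> bool" where
  "shrinks J' J f \<longleftrightarrow> dmap (ivl J') (ivl J) f \<and> mono_on {0..length J'} f \<and> f 0 = 0 \<and> f (length J') = length J"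

lemma shrinksI:
  assumes "\<And>x. x \<le> length J' \<Longrightarrow> f x \<le> length J"
    and "\<And>y. y < length J' \<Longrightarrow>
      if J' ! y then (f y, f (Suc y)) \<in> snd (ivl J) else (f (Suc y), f y) \<in> snd (ivl J)"
    and "mono_on {0..length J'} f" and "f 0 = 0" and "f (length J') = length J"
  shows "shrinks J' J f"
  using assms unfolding shrinks_def dmap_ivl_iff by auto

lemma shrinks_le: "shrinks J' J f \<Longrightarrow> x \<le> length J' \<Longrightarrow> f x \<le> length J"
  unfolding shrinks_def dmap_ivl_iff by auto

lemma shrinks_mono: "shrinks J' J f \<Longrightarrow> x \<le> y \<Longrightarrow> y \<le> length J' \<Longrightarrow> f x \<le> f y"
  unfolding shrinks_def mono_on_def by auto

lemma shrinks_arrow: "shrinks J' J f \<Longrightarrow> (a, b) \<in> snd (ivl J') \<Longrightarrow> (f a, f b) \<in> snd (ivl J)"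
  unfolding shrinks_def dmap_def by auto

lemma shrinks_oriented:
  "shrinks J' J f \<Longrightarrow> y < length J' \<Longrightarrow>
     (if J' ! y then (f y, f (Suc y)) \<in> snd (ivl J) else (f (Suc y), f y) \<in> snd (ivl J))"
  unfolding shrinks_def dmap_ivl_iff by auto

lemma shrinks_step: "shrinks J' J f \<Longrightarrow> y < length J' \<Longrightarrow> f (Suc y) = f y \<or> f (Suc y) = Suc (f y)"
  using shrinks_mono[of J' J f y "Suc y"] shrinks_oriented[of J' J f y]
  by (auto simp: ivl_arrow_iff split: if_splits)

lemma shrinks_boundary: "shrinks J' J f \<Longrightarrow> a \<in> ivl_bd J' \<Longrightarrow> f a \<in> ivl_bd J"
  unfolding shrinks_def ivl_bd_def by auto

lemma shrinking_imp_shrinks: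
  assumes "shrinking J' J f"
  shows "shrinks J' J f"
proof -
  have im: "f ` {0..length J'} = {0..length J}" and m: "mono_on {0..length J'} f"
    using assms unfolding shrinking_def by auto
  obtain a where "a \<le> length J'" "f a = 0"
    using im by (metis atLeastAtMost_iff imageE zero_le)
  then have "f 0 = 0"
    using m unfolding mono_on_def by (metis atLeastAtMost_iff le0 le_zero_eq)
  moreover obtain b where "b \<le> length J'" "f b = length J"
    using im by (metis atLeastAtMost_iff imageE order_refl zero_le)
  then have "f (length J') = length J"
    using m im unfolding mono_on_def by (metis atLeastAtMost_iff image_eqI le0 le_antisym order_refl)
  ultimately show ?thesis
    using assms m unfolding shrinking_def shrinks_def by simp
qed

lemma shrinks_min:
  assumes f: "shrinks J' J f" and h: "shrinks J' J h"
  shows "shrinks J' J (\<lambda>y. min (f y) (h y))" (is "shrinks J' J ?m")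
proof (rule shrinksI)
  show le: "?m x \<le> length J" if "x \<le> length J'" for x
    using shrinks_le[OF f that] by simp
  show "if J' ! y then (?m y, ?m (Suc y)) \<in> snd (ivl J) else (?m (Suc y), ?m y) \<in> snd (ivl J)"
    if y: "y < length J'" for y
  proof -
    have "(?m y, ?m (Suc y)) = (f y, f (Suc y)) \<or> (?m y, ?m (Suc y)) = (h y, h (Suc y)) \<or> ?m y = ?m (Suc y)"
      using shrinks_mono[OF f, of y "Suc y"] shrinks_mono[OF h, of y "Suc y"]
        shrinks_step[OF f y] shrinks_step[OF h y] y by (auto simp: min_def)
    then show ?thesis
      using shrinks_oriented[OF f y] shrinks_oriented[OF h y] ivl_arrow_refl[OF le] y
      by (auto split: if_splits)
  qed
  show "mono_on {0..length J'} ?m"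
    using shrinks_mono[OF f] shrinks_mono[OF h] by (auto intro!: mono_onI simp: min_le_iff_disj)
qed (use f h in \<open>simp_all add: shrinks_def\<close>)

section \<open>Any two shrinkings are homotopic\<close>

text \<open>Elementary homotopies of shrinkings; precomposition turns them into one-step homotopies
  of pair maps.\<close>
definition shrinks_adj :: "interval \<Rightarrow> interval \<Rightarrow> ((nat \<Rightarrow> nat) \<times> (nat \<Rightarrow> nat)) set" where
  "shrinks_adj J' J = {(f, f'). shrinks J' J f \<and> shrinks J' J f' \<and>
     ((\<forall>y\<le>length J'. (f y, f' y) \<in> snd (ivl J)) \<or> (\<forall>y\<le>length J'. (f' y, f y) \<in> snd (ivl J)))}"

lemma sym_shrinks_adj: "sym (shrinks_adj J' J)"
  unfolding shrinks_adj_def sym_def by auto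

text \<open>The edge at x of the lowered map is the edge at x of h.\<close>
lemma shrinks_lower_block:
  assumes f: "shrinks J' J f" and h: "shrinks J' J h" and x: "x < length J'"
    and fx: "f x = v" and fSx: "f (Suc x) = v" and hx: "h x = v - 1" and hSx: "h (Suc x) = v"
  shows "shrinks J' J (\<lambda>y. if y \<le> x \<and> f y = v then v - 1 else f y)" (is "shrinks J' J ?f'")
proof (rule shrinksI)
  show le: "?f' y \<le> length J" if "y \<le> length J'" for y
    using shrinks_le[OF f that] by (auto intro: le_trans[of _ v])
  show "if J' ! y then (?f' y, ?f' (Suc y)) \<in> snd (ivl J) else (?f' (Suc y), ?f' y) \<in> snd (ivl J)"
    if y: "y < length J'" for y
  proof (cases "y = x")
    case True
    then have "?f' y = h y" "?f' (Suc y) = h (Suc y)"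
      using fx fSx hx hSx by auto
    then show ?thesis
      using shrinks_oriented[OF h y] by simp
  next
    case False
    have "f y \<le> f (Suc y)" "f (Suc y) \<le> Suc (f y)"
      using shrinks_mono[OF f, of y "Suc y"] shrinks_step[OF f y] y by auto
    moreover have "Suc y \<le> x \<Longrightarrow> f (Suc y) \<le> v"
      using shrinks_mono[OF f, of "Suc y" x] fx x by simp
    ultimately have "?f' y = f y \<and> ?f' (Suc y) = f (Suc y) \<or> ?f' y = ?f' (Suc y)"
      using False by (auto split: if_splits)
    then consider "?f' y = f y" "?f' (Suc y) = f (Suc y)" | "?f' y = ?f' (Suc y)"
      by blast
    then show ?thesis
    proof cases
      case 1
      then show ?thesis using shrinks_oriented[OF f y] by simp
    next
      case 2
      then show ?thesis using ivl_arrow_refl[OF le, of y] y by simp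
    qed
  qed
  show "mono_on {0..length J'} ?f'"
  proof (rule mono_onI)
    fix a b assume "a \<in> {0..length J'}" "b \<in> {0..length J'}" "a \<le> b"
    then show "?f' a \<le> ?f' b"
      using shrinks_mono[OF f, of a b] by (auto simp: le_diff_conv2)
  qed
qed (use f x in \<open>auto simp: shrinks_def\<close>)

lemma shrinks_adj_lower:
  assumes f: "shrinks J' J f" and f': "shrinks J' J f'" and v: "0 < v" "v \<le> length J"
    and lower: "\<And>y. f' y = f y \<or> (f y = v \<and> f' y = v - 1)"
  shows "(f, f') \<in> shrinks_adj J' J"
proof (cases "J ! (v - 1)")
  case True
  have "(f' y, f y) \<in> snd (ivl J)" if "y \<le> length J'" for y
    using lower[of y] shrinks_le[OF f that] True v by (auto simp: ivl_arrow_iff)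
  then show ?thesis
    using f f' unfolding shrinks_adj_def by auto
next
  case False
  have "(f y, f' y) \<in> snd (ivl J)" if "y \<le> length J'" for y
    using lower[of y] shrinks_le[OF f that] False v by (auto simp: ivl_arrow_iff)
  then show ?thesis
    using f f' unfolding shrinks_adj_def by auto
qed

text \<open>At the last point x where f and h differ, f stays at level v = f x while h climbs from
  v - 1 to v; lower the level-v part of f up to x.\<close>
lemma shrinks_descent_step:
  assumes f: "shrinks J' J f" and h: "shrinks J' J h" and below: "\<forall>y\<le>length J'. h y \<le> f y"
    and ne: "\<exists>y\<le>length J'. f y \<noteq> h y"
  obtains f' where "(f, f') \<in> shrinks_adj J' J" "shrinks J' J f'" "\<forall>y\<le>length J'. h y \<le> f' y"
    "(\<Sum>y\<le>length J'. f' y - h y) < (\<Sum>y\<le>length J'. f y - h y)"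
proof -
  define D where "D = {y. y \<le> length J' \<and> f y \<noteq> h y}"
  define x where "x = Max D"
  have "finite D" "D \<noteq> {}"
    using ne unfolding D_def by auto
  then have "x \<in> D"
    unfolding x_def by (rule Max_in)
  then have x: "x \<le> length J'" "f x \<noteq> h x"
    unfolding D_def by auto
  have above: "f y = h y" if "x < y" "y \<le> length J'" for y
    using Max_ge[OF \<open>finite D\<close>, of y] that unfolding x_def[symmetric] by (auto simp: D_def)
  have "x < length J'"
    using x f h unfolding shrinks_def by (metis le_neq_implies_less)
  define v where "v = f x"
  have "h x < v"
    using below x unfolding v_def by (simp add: order.not_eq_order_implies_strict)
  moreover have "v \<le> f (Suc x)" "f (Suc x) = h (Suc x)" "h (Suc x) \<le> Suc (h x)"
    using shrinks_mono[OF f, of x "Suc x"] above[of "Suc x"] shrinks_step[OF h \<open>x < length J'\<close>]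
      \<open>x < length J'\<close> unfolding v_def by auto
  ultimately have fSx: "f (Suc x) = v" and hx: "h x = v - 1" and hSx: "h (Suc x) = v" and "0 < v"
    by auto
  define f' where "f' y = (if y \<le> x \<and> f y = v then v - 1 else f y)" for y
  have f': "shrinks J' J f'"
    unfolding f'_def using shrinks_lower_block[OF f h \<open>x < length J'\<close> _ fSx hx hSx] v_def by simp
  have "(f, f') \<in> shrinks_adj J' J"
    by (rule shrinks_adj_lower[OF f f' \<open>0 < v\<close>]) (use shrinks_le[OF f x(1)] v_def f'_def in auto)
  moreover have "\<forall>y\<le>length J'. h y \<le> f' y"
    using below shrinks_mono[OF h, of _ x] x hx unfolding f'_def by auto
  moreover have "(\<Sum>y\<le>length J'. f' y - h y) < (\<Sum>y\<le>length J'. f y - h y)"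
    by (rule sum_strict_mono_ex1) (use x hx \<open>0 < v\<close> v_def f'_def in \<open>auto intro!: bexI[of _ x] diff_le_mono\<close>)
  ultimately show thesis
    using f' that by blast
qed

lemma shrinks_descent:
  assumes "shrinks J' J f" and "shrinks J' J h" and "\<forall>y\<le>length J'. h y \<le> f y"
  shows "(f, h) \<in> (shrinks_adj J' J)\<^sup>*"
  using assms
proof (induction "\<Sum>y\<le>length J'. f y - h y" arbitrary: f rule: less_induct)
  case (less f)
  show ?case
  proof (cases "\<exists>y\<le>length J'. f y \<noteq> h y")
    case True
    with less.prems obtain f' where "(f, f') \<in> shrinks_adj J' J" "shrinks J' J f'"
      "\<forall>y\<le>length J'. h y \<le> f' y" "(\<Sum>y\<le>length J'. f' y - h y) < (\<Sum>y\<le>length J'. f y - h y)"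
      by (rule shrinks_descent_step)
    with less.hyps less.prems(2) show ?thesis
      by (meson converse_rtrancl_into_rtrancl)
  next
    case False
    then have "(f, h) \<in> shrinks_adj J' J"
      using less.prems shrinks_le ivl_arrow_refl unfolding shrinks_adj_def by auto
    then show ?thesis by simp
  qed
qed

lemma shrinks_connected:
  assumes f: "shrinks J' J f" and h: "shrinks J' J h"
  shows "(f, h) \<in> (shrinks_adj J' J)\<^sup>*"
proof -
  have m: "shrinks J' J (\<lambda>y. min (f y) (h y))"
    using shrinks_min[OF f h] .
  have "(f, \<lambda>y. min (f y) (h y)) \<in> (shrinks_adj J' J)\<^sup>*" "(h, \<lambda>y. min (f y) (h y)) \<in> (shrinks_adj J' J)\<^sup>*"
    using shrinks_descent[OF f m] shrinks_descent[OF h m] by auto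
  then show ?thesis
    using sym_rtrancl[OF sym_shrinks_adj] by (meson rtrancl_trans symD)
qed

section \<open>Common refinements\<close>

lemma shrinking_restrict_iff:
  "shrinking J' J (restrict f {0..length J'}) \<longleftrightarrow>
     dmap (ivl J') (ivl J) f \<and> f ` {0..length J'} = {0..length J} \<and> mono_on {0..length J'} f"
proof -
  have "dmap (ivl J') (ivl J) (restrict f {0..length J'}) \<longleftrightarrow> dmap (ivl J') (ivl J) f"
    unfolding dmap_ivl_iff by auto
  moreover have "mono_on {0..length J'} (restrict f {0..length J'}) \<longleftrightarrow> mono_on {0..length J'} f"
    unfolding mono_on_def by auto
  ultimately show ?thesis
    unfolding shrinking_def by simp
qed

lemma shrinking_id: "shrinking J J (restrict id {0..length J})"
  unfolding shrinking_restrict_iff dmap_def by (auto simp: mono_on_def)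

lemma shrinking_comp:
  assumes f: "shrinking K' J f" and h: "shrinking K K' h"
  shows "shrinking K J (restrict (f \<circ> h) {0..length K})"
  unfolding shrinking_restrict_iff
proof (intro conjI)
  show "dmap (ivl K) (ivl J) (f \<circ> h)"
    using f h unfolding shrinking_def dmap_def by auto
  have "(f \<circ> h) ` {0..length K} = f ` h ` {0..length K}"
    by (rule image_comp[symmetric])
  then show "(f \<circ> h) ` {0..length K} = {0..length J}"
    using f h unfolding shrinking_def by simp
  show "mono_on {0..length K} (f \<circ> h)"
    using shrinks_mono[OF shrinking_imp_shrinks[OF f]] shrinks_mono[OF shrinking_imp_shrinks[OF h]]
      shrinks_le[OF shrinking_imp_shrinks[OF h]] by (auto intro!: mono_onI)
qed

lemma shrinking_append_left:
  "shrinking (J1 @ J2) J1 (restrict (\<lambda>y. min y (length J1)) {0..length (J1 @ J2)})"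
  unfolding shrinking_restrict_iff
proof (intro conjI)
  have "y \<in> (\<lambda>y. min y (length J1)) ` {0..length (J1 @ J2)}" if "y \<le> length J1" for y
    using that by (intro image_eqI[of _ _ y]) auto
  then show "(\<lambda>y. min y (length J1)) ` {0..length (J1 @ J2)} = {0..length J1}"
    by auto
qed (auto simp: dmap_ivl_iff ivl_arrow_iff nth_append min_def mono_on_def)

lemma shrinking_append_right:
  "shrinking (J1 @ J2) J2 (restrict (\<lambda>y. y - length J1) {0..length (J1 @ J2)})"
  unfolding shrinking_restrict_iff
proof (intro conjI)
  have "y \<in> (\<lambda>y. y - length J1) ` {0..length (J1 @ J2)}" if "y \<le> length J2" for y
    using that by (intro image_eqI[of _ _ "y + length J1"]) auto
  then show "(\<lambda>y. y - length J1) ` {0..length (J1 @ J2)} = {0..length J2}"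
    by auto
qed (auto simp: dmap_ivl_iff ivl_arrow_iff nth_append Suc_diff_le mono_on_def)

lemma common_refinement: "\<exists>K. \<forall>J\<in>set Js. \<exists>f. shrinking K J f"
proof (induction Js)
  case (Cons J Js)
  then obtain K where K: "\<forall>J'\<in>set Js. \<exists>f. shrinking K J' f" by blast
  have "\<exists>f. shrinking (J @ K) J' f" if "J' \<in> set (J # Js)" for J'
  proof (cases "J' = J")
    case True
    then show ?thesis using shrinking_append_left by blast
  next
    case False
    with that K obtain f where "shrinking K J' f" by auto
    then show ?thesis using shrinking_comp[OF _ shrinking_append_right] by blast
  qed
  then show ?case by blast
qed simp

definition shrinks_list :: "interval list \<Rightarrow> interval list \<Rightarrow> (nat \<Rightarrow> nat) list \<Rightarrow> bool" where
  "shrinks_list Ks Js fs \<longleftrightarrow> length Ks = length Js \<and> length fs = length Js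
     \<and> (\<forall>i<length Js. shrinks (Ks ! i) (Js ! i) (fs ! i))"

definition shrinking_list :: "interval list \<Rightarrow> interval list \<Rightarrow> (nat \<Rightarrow> nat) list \<Rightarrow> bool" where
  "shrinking_list Ks Js fs \<longleftrightarrow> length Ks = length Js \<and> length fs = length Js
     \<and> (\<forall>i<length Js. shrinking (Ks ! i) (Js ! i) (fs ! i))"

lemma shrinking_list_imp_shrinks_list: "shrinking_list Ks Js fs \<Longrightarrow> shrinks_list Ks Js fs"
  unfolding shrinking_list_def shrinks_list_def using shrinking_imp_shrinks by auto

lemma shrinks_list_update:
  "shrinks_list Ks Js fs \<Longrightarrow> shrinks (Ks ! i) (Js ! i) f \<Longrightarrow> shrinks_list Ks Js (fs[i := f])"
  unfolding shrinks_list_def by (metis length_list_update nth_list_update_eq nth_list_update_neq)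

lemma shrinking_list_id: "shrinking_list Js Js (map (\<lambda>J. restrict id {0..length J}) Js)"
  unfolding shrinking_list_def using shrinking_id by simp

lemma shrinking_list_replicate:
  "shrinking J' J f \<Longrightarrow> shrinking_list (replicate n J') (replicate n J) (replicate n f)"
  unfolding shrinking_list_def by simp

lemma shrinking_list_replicateI:
  assumes "\<forall>J\<in>set Js. \<exists>f. shrinking K J f"
  obtains fs where "shrinking_list (replicate (length Js) K) Js fs"
proof -
  have "\<forall>i<length Js. \<exists>f. shrinking K (Js ! i) f"
    using assms by simp
  then show thesis
    using that unfolding shrinking_list_def Skolem_list_nth by auto
qed

lemma shrinking_list_cospan:
  assumes "length Ks1 = length Ks2"
  obtains Ks fs gs where "shrinking_list Ks Ks1 fs" "shrinking_list Ks Ks2 gs"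
proof
  let ?Ks = "map (\<lambda>i. Ks1 ! i @ Ks2 ! i) [0..<length Ks1]"
  show "shrinking_list ?Ks Ks1
          (map (\<lambda>i. restrict (\<lambda>y. min y (length (Ks1 ! i))) {0..length (?Ks ! i)}) [0..<length Ks1])"
    unfolding shrinking_list_def using shrinking_append_left by simp
  show "shrinking_list ?Ks Ks2
          (map (\<lambda>i. restrict (\<lambda>y. y - length (Ks1 ! i)) {0..length (?Ks ! i)}) [0..<length Ks1])"
    unfolding shrinking_list_def using shrinking_append_right assms by simp
qed

definition comp_list :: "interval list \<Rightarrow> (nat \<Rightarrow> nat) list \<Rightarrow> (nat \<Rightarrow> nat) list \<Rightarrow> (nat \<Rightarrow> nat) list" where
  "comp_list Ks fs gs = map (\<lambda>i. restrict (fs ! i \<circ> gs ! i) {0..length (Ks ! i)}) [0..<length Ks]"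

lemma shrinking_list_comp:
  "shrinking_list Ks' Js fs \<Longrightarrow> shrinking_list Ks Ks' gs \<Longrightarrow> shrinking_list Ks Js (comp_list Ks fs gs)"
  unfolding shrinking_list_def comp_list_def using shrinking_comp by auto

section \<open>Precomposition with box products of shrinkings\<close>

lemma tmap_length [simp]: "length (tmap fs xs) = length xs"
  unfolding tmap_def by simp

lemma tmap_nth [simp]: "i < length xs \<Longrightarrow> tmap fs xs ! i = (fs ! i) (xs ! i)"
  unfolding tmap_def by simp

lemma tmap_tverts: "shrinks_list Ks Js fs \<Longrightarrow> xs \<in> tverts Ks \<Longrightarrow> tmap fs xs \<in> tverts Js"
  unfolding shrinks_list_def tverts_def using shrinks_le by auto

lemma tmap_tarrows:
  assumes fs: "shrinks_list Ks Js fs" and xy: "(xs, ys) \<in> tarrows Ks"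
  shows "(tmap fs xs, tmap fs ys) \<in> tarrows Js"
proof (cases "xs = ys")
  case True
  then show ?thesis
    using xy tmap_tverts[OF fs] unfolding tarrows_def by auto
next
  case False
  then obtain i where i: "i < length Ks" "\<forall>j<length Ks. j \<noteq> i \<longrightarrow> xs ! j = ys ! j"
    "(xs ! i, ys ! i) \<in> snd (ivl (Ks ! i))"
    using xy unfolding tarrows_def by auto
  have xs: "xs \<in> tverts Ks" and ys: "ys \<in> tverts Ks"
    using xy unfolding tarrows_def by auto
  then have "length xs = length Js" "length ys = length Js" "length Ks = length Js"
    using fs unfolding tverts_def shrinks_list_def by auto
  moreover have "((fs ! i) (xs ! i), (fs ! i) (ys ! i)) \<in> snd (ivl (Js ! i))"
    using shrinks_arrow[OF _ i(3)] fs i(1) unfolding shrinks_list_def by auto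
  ultimately show ?thesis
    using i tmap_tverts[OF fs xs] tmap_tverts[OF fs ys] unfolding tarrows_def by auto
qed

lemma tmap_tbd: "shrinks_list Ks Js fs \<Longrightarrow> xs \<in> tbd Ks \<Longrightarrow> tmap fs xs \<in> tbd Js"
  unfolding tbd_def shrinks_list_def using tmap_tverts[of Ks Js fs] shrinks_boundary
  by (fastforce simp: shrinks_list_def tverts_def)

lemma tmap_update_tarrows:
  assumes fs: "shrinks_list Ks Js fs" and i: "i < length Js"
    and f: "shrinks (Ks ! i) (Js ! i) f" and f': "shrinks (Ks ! i) (Js ! i) f'"
    and arr: "\<forall>y\<le>length (Ks ! i). (f y, f' y) \<in> snd (ivl (Js ! i))" and xs: "xs \<in> tverts Ks"
  shows "(tmap (fs[i := f]) xs, tmap (fs[i := f']) xs) \<in> tarrows Js"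
proof -
  have len: "length xs = length Js" "length fs = length Js" "length Ks = length Js"
    and "xs ! i \<le> length (Ks ! i)"
    using fs xs i unfolding shrinks_list_def tverts_def by auto
  moreover have "tmap (fs[i := f]) xs \<in> tverts Js" "tmap (fs[i := f']) xs \<in> tverts Js"
    using tmap_tverts[OF shrinks_list_update[OF fs f] xs] tmap_tverts[OF shrinks_list_update[OF fs f'] xs] .
  ultimately show ?thesis
    using arr i unfolding tarrows_def by (auto intro!: exI[of _ i])
qed

lemma pmap_vertex: "pmap Js G g \<phi> \<Longrightarrow> xs \<in> tverts Js \<Longrightarrow> \<phi> xs \<in> fst G"
  unfolding pmap_def dmap_def tgraph_def by auto

lemma pmap_arrow: "pmap Js G g \<phi> \<Longrightarrow> (xs, ys) \<in> tarrows Js \<Longrightarrow> (\<phi> xs, \<phi> ys) \<in> snd G"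
  unfolding pmap_def dmap_def tgraph_def by auto

definition precomp_map :: "(nat list \<Rightarrow> 'a) \<Rightarrow> (nat \<Rightarrow> nat) list \<Rightarrow> interval list \<Rightarrow> nat list \<Rightarrow> 'a" where
  "precomp_map \<phi> fs Ks = restrict (\<phi> \<circ> tmap fs) (tverts Ks)"

lemma precomp_map_apply: "xs \<in> tverts Ks \<Longrightarrow> precomp_map \<phi> fs Ks xs = \<phi> (tmap fs xs)"
  unfolding precomp_map_def by simp

lemma pmap_precomp_map:
  assumes fs: "shrinks_list Ks Js fs" and \<phi>: "pmap Js G g \<phi>"
  shows "pmap Ks G g (precomp_map \<phi> fs Ks)"
proof -
  have "(precomp_map \<phi> fs Ks xs, precomp_map \<phi> fs Ks ys) \<in> snd G" if "(xs, ys) \<in> tarrows Ks" for xs ys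
    using that pmap_arrow[OF \<phi> tmap_tarrows[OF fs that]] unfolding tarrows_def
    by (simp add: precomp_map_apply)
  moreover have "precomp_map \<phi> fs Ks xs \<in> fst G" if "xs \<in> tverts Ks" for xs
    using that pmap_vertex[OF \<phi> tmap_tverts[OF fs that]] by (simp add: precomp_map_apply)
  moreover have "precomp_map \<phi> fs Ks xs = g" if "xs \<in> tbd Ks" for xs
    using that \<phi> tmap_tbd[OF fs that] unfolding pmap_def tbd_def by (simp add: precomp_map_apply)
  moreover have "precomp_map \<phi> fs Ks \<in> extensional (tverts Ks)"
    unfolding precomp_map_def by simp
  ultimately show ?thesis
    unfolding pmap_def dmap_def tgraph_def by auto
qed

lemma equiv_rtrancl: "sym r \<Longrightarrow> equiv UNIV (r\<^sup>*)"
  by (simp add: equiv_def refl_rtrancl sym_rtrancl trans_rtrancl)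

lemma equiv_htpy: "equiv UNIV (htpy Js G g)"
  unfolding htpy_def by (rule equiv_rtrancl) (auto simp: sym_def htpy1_def)

lemma htpy1_precomp_map:
  assumes fs: "shrinks_list Ks Js fs" and h: "(\<phi>, \<psi>) \<in> htpy1 Js G g"
  shows "(precomp_map \<phi> fs Ks, precomp_map \<psi> fs Ks) \<in> htpy1 Ks G g"
proof -
  have p: "pmap Js G g \<phi>" "pmap Js G g \<psi>"
    and dir: "(\<forall>x\<in>tverts Js. (\<phi> x, \<psi> x) \<in> snd G) \<or> (\<forall>x\<in>tverts Js. (\<psi> x, \<phi> x) \<in> snd G)"
    using h unfolding htpy1_def by auto
  have "pmap Ks G g (precomp_map \<phi> fs Ks)" "pmap Ks G g (precomp_map \<psi> fs Ks)"
    using pmap_precomp_map[OF fs p(1)] pmap_precomp_map[OF fs p(2)] .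
  moreover from dir have
    "(\<forall>x\<in>tverts Ks. (precomp_map \<phi> fs Ks x, precomp_map \<psi> fs Ks x) \<in> snd G) \<or>
     (\<forall>x\<in>tverts Ks. (precomp_map \<psi> fs Ks x, precomp_map \<phi> fs Ks x) \<in> snd G)"
    using tmap_tverts[OF fs] by (auto simp: precomp_map_apply)
  ultimately show ?thesis
    unfolding htpy1_def pmap_def by auto
qed

lemma htpy_precomp_map:
  assumes fs: "shrinks_list Ks Js fs" and h: "(\<phi>, \<psi>) \<in> htpy Js G g"
  shows "(precomp_map \<phi> fs Ks, precomp_map \<psi> fs Ks) \<in> htpy Ks G g"
  using h unfolding htpy_def
  by (induction rule: rtrancl_induct) (auto intro: rtrancl_into_rtrancl htpy1_precomp_map[OF fs])

lemma htpy1_precomp_map_update: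
  assumes fs: "shrinks_list Ks Js fs" and i: "i < length Js" and \<phi>: "pmap Js G g \<phi>"
    and adj: "(f, f') \<in> shrinks_adj (Ks ! i) (Js ! i)"
  shows "(precomp_map \<phi> (fs[i := f]) Ks, precomp_map \<phi> (fs[i := f']) Ks) \<in> htpy1 Ks G g"
proof -
  have f: "shrinks (Ks ! i) (Js ! i) f" and f': "shrinks (Ks ! i) (Js ! i) f'"
    using adj unfolding shrinks_adj_def by auto
  let ?p = "precomp_map \<phi> (fs[i := f]) Ks" and ?p' = "precomp_map \<phi> (fs[i := f']) Ks"
  have "pmap Ks G g ?p" "pmap Ks G g ?p'"
    using pmap_precomp_map[OF shrinks_list_update[OF fs] \<phi>] f f' by auto
  moreover have "(\<forall>xs\<in>tverts Ks. (?p xs, ?p' xs) \<in> snd G) \<or> (\<forall>xs\<in>tverts Ks. (?p' xs, ?p xs) \<in> snd G)"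
    using adj pmap_arrow[OF \<phi> tmap_update_tarrows[OF fs i f f']] pmap_arrow[OF \<phi> tmap_update_tarrows[OF fs i f' f]]
    unfolding shrinks_adj_def by (auto simp: precomp_map_apply)
  ultimately show ?thesis
    unfolding htpy1_def pmap_def by auto
qed

lemma htpy_precomp_map_update:
  assumes fs: "shrinks_list Ks Js fs" and i: "i < length Js" and \<phi>: "pmap Js G g \<phi>"
    and "(f, f') \<in> (shrinks_adj (Ks ! i) (Js ! i))\<^sup>*"
  shows "(precomp_map \<phi> (fs[i := f]) Ks, precomp_map \<phi> (fs[i := f']) Ks) \<in> htpy Ks G g"
  using assms(4)
proof (induction rule: rtrancl_induct)
  case (step f' f'')
  have "shrinks (Ks ! i) (Js ! i) f'"
    using step.hyps(2) unfolding shrinks_adj_def by auto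
  from htpy1_precomp_map_update[OF shrinks_list_update[OF fs this] i \<phi> step.hyps(2)]
  have "(precomp_map \<phi> (fs[i := f']) Ks, precomp_map \<phi> (fs[i := f'']) Ks) \<in> htpy1 Ks G g"
    by simp
  with step.IH show ?case
    unfolding htpy_def by (rule rtrancl_into_rtrancl)
qed (simp add: htpy_def)

text \<open>Replace the factors of fs by those of gs one coordinate at a time.\<close>
lemma htpy_precomp_map_indep:
  assumes fs: "shrinks_list Ks Js fs" and gs: "shrinks_list Ks Js gs" and \<phi>: "pmap Js G g \<phi>"
  shows "(precomp_map \<phi> fs Ks, precomp_map \<phi> gs Ks) \<in> htpy Ks G g"
proof -
  define mix where "mix k = map (\<lambda>j. if j < k then gs ! j else fs ! j) [0..<length Js]" for k
  have len: "length fs = length Js" "length gs = length Js"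
    using fs gs unfolding shrinks_list_def by auto
  have mix: "shrinks_list Ks Js (mix k)" for k
    using fs gs unfolding shrinks_list_def mix_def by auto
  have "(precomp_map \<phi> fs Ks, precomp_map \<phi> (mix k) Ks) \<in> htpy Ks G g" if "k \<le> length Js" for k
    using that
  proof (induction k)
    case 0
    have "mix 0 = fs"
      unfolding mix_def using len by (intro nth_equalityI) auto
    then show ?case
      unfolding htpy_def by simp
  next
    case (Suc k)
    have "(mix k)[k := fs ! k] = mix k" "(mix k)[k := gs ! k] = mix (Suc k)"
      unfolding mix_def using len Suc.prems by (auto intro!: nth_equalityI simp: nth_list_update)
    moreover have "(fs ! k, gs ! k) \<in> (shrinks_adj (Ks ! k) (Js ! k))\<^sup>*"
      using shrinks_connected fs gs Suc.prems unfolding shrinks_list_def by simp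
    moreover have "k < length Js"
      using Suc.prems by simp
    ultimately have "(precomp_map \<phi> (mix k) Ks, precomp_map \<phi> (mix (Suc k)) Ks) \<in> htpy Ks G g"
      using htpy_precomp_map_update[OF mix \<open>k < length Js\<close> \<phi>] by metis
    then show ?case
      using Suc equiv_htpy unfolding equiv_def trans_def by (meson Suc_leD)
  qed
  moreover have "mix (length Js) = gs"
    unfolding mix_def using len by (intro nth_equalityI) auto
  ultimately show ?thesis
    by (metis order_refl)
qed

lemma hsetE:
  assumes "c \<in> hset Js G g"
  obtains \<phi> where "pmap Js G g \<phi>" "c = htpy Js G g `` {\<phi>}"
  using assms unfolding hset_def by (auto elim: quotientE)

lemma precomp_class:
  assumes \<phi>: "pmap Js G g \<phi>" and fs: "shrinks_list Ks Js fs"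
  shows "precomp G g Ks fs (htpy Js G g `` {\<phi>}) = htpy Ks G g `` {precomp_map \<phi> fs Ks}"
proof -
  have "htpy Ks G g `` {precomp_map \<psi> fs Ks} = htpy Ks G g `` {precomp_map \<phi> fs Ks}"
    if "(\<phi>, \<psi>) \<in> htpy Js G g" for \<psi>
    using equiv_class_eq[OF equiv_htpy htpy_precomp_map[OF fs that]] by simp
  moreover have "(\<phi>, \<phi>) \<in> htpy Js G g"
    unfolding htpy_def by simp
  ultimately show ?thesis
    unfolding precomp_def precomp_map_def[symmetric] by blast
qed

lemma precomp_hset:
  assumes c: "c \<in> hset Js G g" and fs: "shrinking_list Ks Js fs"
  shows "precomp G g Ks fs c \<in> hset Ks G g"
proof -
  obtain \<phi> where \<phi>: "pmap Js G g \<phi>" "c = htpy Js G g `` {\<phi>}"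
    using c by (rule hsetE)
  note fs' = shrinking_list_imp_shrinks_list[OF fs]
  show ?thesis
    using precomp_class[OF \<phi>(1) fs'] pmap_precomp_map[OF fs' \<phi>(1)] \<phi>(2)
    unfolding hset_def by (auto intro: quotientI)
qed

lemma precomp_shrinking_indep:
  assumes c: "c \<in> hset Js G g" and fs: "shrinking_list Ks Js fs" and gs: "shrinking_list Ks Js gs"
  shows "precomp G g Ks fs c = precomp G g Ks gs c"
proof -
  obtain \<phi> where \<phi>: "pmap Js G g \<phi>" "c = htpy Js G g `` {\<phi>}"
    using c by (rule hsetE)
  note fs' = shrinking_list_imp_shrinks_list[OF fs] and gs' = shrinking_list_imp_shrinks_list[OF gs]
  show ?thesis
    unfolding \<phi>(2) precomp_class[OF \<phi>(1) fs'] precomp_class[OF \<phi>(1) gs']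
    using equiv_class_eq[OF equiv_htpy htpy_precomp_map_indep[OF fs' gs' \<phi>(1)]] .
qed

lemma tmap_comp_list: "xs \<in> tverts Ks \<Longrightarrow> tmap (comp_list Ks fs gs) xs = tmap fs (tmap gs xs)"
  unfolding tverts_def comp_list_def by (intro nth_equalityI) auto

lemma precomp_map_precomp_map:
  "shrinks_list Ks Ks' gs \<Longrightarrow>
     precomp_map (precomp_map \<phi> fs Ks') gs Ks = precomp_map \<phi> (comp_list Ks fs gs) Ks"
  using tmap_tverts[of Ks Ks' gs] tmap_comp_list unfolding precomp_map_def by (auto simp: fun_eq_iff)

lemma precomp_precomp:
  assumes c: "c \<in> hset Js G g" and fs: "shrinking_list Ks' Js fs" and gs: "shrinking_list Ks Ks' gs"
  shows "precomp G g Ks gs (precomp G g Ks' fs c) = precomp G g Ks (comp_list Ks fs gs) c"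
proof -
  obtain \<phi> where \<phi>: "pmap Js G g \<phi>" "c = htpy Js G g `` {\<phi>}"
    using c by (rule hsetE)
  note fs' = shrinking_list_imp_shrinks_list[OF fs] and gs' = shrinking_list_imp_shrinks_list[OF gs]
  show ?thesis
    unfolding \<phi>(2) precomp_class[OF \<phi>(1) fs'] precomp_class[OF pmap_precomp_map[OF fs' \<phi>(1)] gs']
      precomp_class[OF \<phi>(1) shrinking_list_imp_shrinks_list[OF shrinking_list_comp[OF fs gs]]]
      precomp_map_precomp_map[OF gs'] ..
qed

lemma Image_image_equiv_class:
  assumes R: "equiv UNIV R" and R': "equiv UNIV R'" and hom: "\<And>x y. (x, y) \<in> R \<Longrightarrow> (h x, h y) \<in> R'"
  shows "R' `` (h ` (R `` {a})) = R' `` {h a}"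
proof
  show "R' `` (h ` (R `` {a})) \<subseteq> R' `` {h a}"
    using hom R' unfolding equiv_def trans_def by blast
  show "R' `` {h a} \<subseteq> R' `` (h ` (R `` {a}))"
    using R unfolding equiv_def refl_on_def by blast
qed

lemma bij_betw_quotient_map:
  assumes R: "equiv UNIV R" and R': "equiv UNIV R'"
    and hom: "\<And>x y. (x, y) \<in> R \<Longrightarrow> (h x, h y) \<in> R'"
    and reflect: "\<And>x y. x \<in> C \<Longrightarrow> y \<in> C \<Longrightarrow> (h x, h y) \<in> R' \<Longrightarrow> (x, y) \<in> R"
    and into: "h ` C \<subseteq> C'" and onto: "\<And>b. b \<in> C' \<Longrightarrow> \<exists>a\<in>C. (b, h a) \<in> R'"
  shows "bij_betw (\<lambda>X. R' `` (h ` X)) (C // R) (C' // R')"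
proof (rule bij_betw_imageI)
  have image_class: "R' `` (h ` (R `` {a})) = R' `` {h a}" for a
    using R R' hom by (rule Image_image_equiv_class)
  show "inj_on (\<lambda>X. R' `` (h ` X)) (C // R)"
  proof (rule inj_onI)
    fix X Y assume "X \<in> C // R" "Y \<in> C // R" and eq: "R' `` (h ` X) = R' `` (h ` Y)"
    then obtain x y where xy: "x \<in> C" "X = R `` {x}" "y \<in> C" "Y = R `` {y}"
      by (auto elim!: quotientE)
    with eq have "(h x, h y) \<in> R'"
      using image_class eq_equiv_class_iff[OF R'] by simp
    then show "X = Y"
      using xy reflect equiv_class_eq[OF R] by simp
  qed
  show "(\<lambda>X. R' `` (h ` X)) ` (C // R) = C' // R'"
  proof
    show "(\<lambda>X. R' `` (h ` X)) ` (C // R) \<subseteq> C' // R'"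
    proof
      fix Y assume "Y \<in> (\<lambda>X. R' `` (h ` X)) ` (C // R)"
      then obtain a where "a \<in> C" "Y = R' `` {h a}"
        using image_class by (auto elim!: quotientE)
      then show "Y \<in> C' // R'"
        using into by (auto intro: quotientI)
    qed
    show "C' // R' \<subseteq> (\<lambda>X. R' `` (h ` X)) ` (C // R)"
    proof
      fix Y assume "Y \<in> C' // R'"
      then obtain b where b: "b \<in> C'" "Y = R' `` {b}"
        by (rule quotientE)
      then obtain a where "a \<in> C" "(b, h a) \<in> R'"
        using onto by blast
      then show "Y \<in> (\<lambda>X. R' `` (h ` X)) ` (C // R)"
        using b image_class equiv_class_eq[OF R'] by (auto intro!: image_eqI[of _ _ "R `` {a}"] quotientI)
    qed
  qed
qed

lemma equiv_prel: "equiv UNIV (prel Ss G g)"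
  unfolding prel_def by (rule equiv_rtrancl) (rule sym_Un_converse)

lemma snd_Shr_iff: "(J', J, f) \<in> snd Shr \<longleftrightarrow> shrinking J' J f"
  unfolding Shr_def by simp

lemma fst_Shr [simp]: "fst Shr = UNIV"
  unfolding Shr_def by simp

lemma pobjs_Shr [simp]: "pobjs (replicate n Shr) = {Js. length Js = n}"
  unfolding pobjs_def by auto

lemma pcarrier_hset: "x \<in> pcarrier Ss G g \<Longrightarrow> snd x \<in> hset (fst x) G g"
  unfolding pcarrier_def by auto

lemma pcarrier_Shr_iff: "(Js, c) \<in> pcarrier (replicate n Shr) G g \<longleftrightarrow> length Js = n \<and> c \<in> hset Js G g"
  unfolding pcarrier_def by simp

lemma pcarrier_subset_Shr: "pcarrier Ss G g \<subseteq> pcarrier (replicate (length Ss) Shr) G g"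
  unfolding pcarrier_def pobjs_def by auto

lemma pgen_iff:
  "((Js, c), (Ks, d)) \<in> pgen Ss G g \<longleftrightarrow> (Js \<in> pobjs Ss \<and> Ks \<in> pobjs Ss \<and> c \<in> hset Js G g) \<and>
     (\<exists>fs. length fs = length Ss \<and> (\<forall>i<length Ss. (Ks ! i, Js ! i, fs ! i) \<in> snd (Ss ! i))
        \<and> d = precomp G g Ks fs c)"
    (is "_ \<longleftrightarrow> ?objs \<and> (\<exists>fs. ?mor fs)")
proof
  assume "((Js, c), (Ks, d)) \<in> pgen Ss G g"
  then obtain ms where "?objs" and len: "length ms = length Ss"
    and ms: "\<forall>i<length Ss. ms ! i \<in> snd (Ss ! i) \<and> fst (ms ! i) = Ks ! i \<and> fst (snd (ms ! i)) = Js ! i"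
    and "d = precomp G g Ks (map (\<lambda>m. snd (snd m)) ms) c"
    unfolding pgen_def by blast
  moreover have "(Ks ! i, Js ! i, snd (snd (ms ! i))) = ms ! i" if "i < length Ss" for i
    using ms that by (simp add: prod_eq_iff)
  ultimately have "?mor (map (\<lambda>m. snd (snd m)) ms)"
    using len ms by auto
  with \<open>?objs\<close> show "?objs \<and> (\<exists>fs. ?mor fs)"
    by blast
next
  assume "?objs \<and> (\<exists>fs. ?mor fs)"
  then obtain fs where "?objs" "?mor fs"
    by blast
  moreover have "map (\<lambda>m. snd (snd m)) (map (\<lambda>i. (Ks ! i, Js ! i, fs ! i)) [0..<length Ss]) = fs"
    using \<open>?mor fs\<close> by (intro nth_equalityI) auto
  ultimately show "((Js, c), (Ks, d)) \<in> pgen Ss G g"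
    unfolding pgen_def mem_Collect_eq
    by (intro exI[of _ Js] exI[of _ Ks] exI[of _ c] exI[of _ "map (\<lambda>i. (Ks ! i, Js ! i, fs ! i)) [0..<length Ss]"])
      auto
qed

lemma pgen_Shr_iff:
  "((Js, c), (Ks, d)) \<in> pgen (replicate n Shr) G g \<longleftrightarrow>
     length Js = n \<and> c \<in> hset Js G g \<and> (\<exists>fs. shrinking_list Ks Js fs \<and> d = precomp G g Ks fs c)"
  by (auto simp: pgen_iff shrinking_list_def snd_Shr_iff)

lemma pgen_Shr_carrier:
  assumes "(x, y) \<in> pgen (replicate n Shr) G g"
  shows "x \<in> pcarrier (replicate n Shr) G g" and "y \<in> pcarrier (replicate n Shr) G g"
proof -
  obtain Js c Ks d where xy: "x = (Js, c)" "y = (Ks, d)"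
    by (cases x, cases y)
  then obtain fs where n: "length Js = n" and c: "c \<in> hset Js G g" and fs: "shrinking_list Ks Js fs"
    and d: "d = precomp G g Ks fs c"
    using assms[unfolded xy pgen_Shr_iff] by blast
  have "length Ks = n"
    using n fs unfolding shrinking_list_def by simp
  moreover have "d \<in> hset Ks G g"
    unfolding d by (rule precomp_hset[OF c fs])
  ultimately show "x \<in> pcarrier (replicate n Shr) G g" "y \<in> pcarrier (replicate n Shr) G g"
    using n c unfolding xy pcarrier_Shr_iff by simp_all
qed

lemma nice_subcat_shrinking: "nice_subcat S \<Longrightarrow> (J', J, f) \<in> snd S \<Longrightarrow> shrinking J' J f"
  unfolding nice_subcat_def subcat_of_Shr_def using snd_Shr_iff by blast

lemma nice_morphisms_shrinking_list:
  assumes "\<forall>S\<in>set Ss. nice_subcat S" and "Js \<in> pobjs Ss" and "Ks \<in> pobjs Ss"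
    and "length fs = length Ss" and "\<forall>i<length Ss. (Ks ! i, Js ! i, fs ! i) \<in> snd (Ss ! i)"
  shows "shrinking_list Ks Js fs"
proof -
  have "shrinking (Ks ! i) (Js ! i) (fs ! i)" if "i < length Ss" for i
    using nice_subcat_shrinking[of "Ss ! i"] assms(1,5) that by simp
  then show ?thesis
    using assms(2-4) unfolding shrinking_list_def pobjs_def by simp
qed

lemma nice_subcat_morphism:
  "nice_subcat S \<Longrightarrow> J \<in> fst S \<Longrightarrow> J' \<in> fst S \<Longrightarrow> shrinking J' J f \<Longrightarrow> \<exists>f'. (J', J, f') \<in> snd S"
  unfolding nice_subcat_def by blast

lemma nice_subcat_cover: "nice_subcat S \<Longrightarrow> \<exists>J'\<in>fst S. \<exists>f. shrinking J' J f"
  unfolding nice_subcat_def by blast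

lemma nice_subcat_common_cover:
  assumes "nice_subcat S"
  obtains K where "K \<in> fst S" "\<forall>J\<in>set Js. \<exists>f. shrinking K J f"
proof -
  obtain K0 where K0: "\<forall>J\<in>set Js. \<exists>f. shrinking K0 J f"
    using common_refinement by blast
  obtain K w where "K \<in> fst S" "shrinking K K0 w"
    using nice_subcat_cover[OF assms] by blast
  then have "\<forall>J\<in>set Js. \<exists>f. shrinking K J f"
    using K0 shrinking_comp by blast
  with \<open>K \<in> fst S\<close> show thesis
    by (rule that)
qed

lemma nice_cover_list:
  assumes Ss: "\<forall>S\<in>set Ss. nice_subcat S" and "length Js = length Ss"
  obtains Ks fs where "Ks \<in> pobjs Ss" "shrinking_list Ks Js fs"
proof -
  have "\<exists>p. fst p \<in> fst (Ss ! i) \<and> shrinking (fst p) (Js ! i) (snd p)" if i: "i < length Ss" for i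
  proof -
    obtain J' f where "J' \<in> fst (Ss ! i)" "shrinking J' (Js ! i) f"
      using nice_subcat_cover[of "Ss ! i" "Js ! i"] Ss i by auto
    then show ?thesis
      by (intro exI[of _ "(J', f)"]) simp
  qed
  then obtain ps where "length ps = length Ss"
    "\<forall>i<length Ss. fst (ps ! i) \<in> fst (Ss ! i) \<and> shrinking (fst (ps ! i)) (Js ! i) (snd (ps ! i))"
    using Skolem_list_nth[where P = "\<lambda>i p. fst p \<in> fst (Ss ! i) \<and> shrinking (fst p) (Js ! i) (snd p)"]
    by blast
  then have "map fst ps \<in> pobjs Ss" "shrinking_list (map fst ps) Js (map snd ps)"
    using assms(2) unfolding pobjs_def shrinking_list_def by simp_all
  then show thesis
    by (rule that)
qed

lemma pgen_nice_edge:
  assumes Ss: "\<forall>S\<in>set Ss. nice_subcat S" and Js: "Js \<in> pobjs Ss" and Ks: "Ks \<in> pobjs Ss"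
    and vs: "shrinking_list Ks Js vs" and c: "c \<in> hset Js G g"
  obtains fs where "shrinking_list Ks Js fs" "((Js, c), (Ks, precomp G g Ks fs c)) \<in> pgen Ss G g"
proof -
  have "\<exists>f. (Ks ! i, Js ! i, f) \<in> snd (Ss ! i)" if i: "i < length Ss" for i
  proof (rule nice_subcat_morphism)
    show "nice_subcat (Ss ! i)" "Js ! i \<in> fst (Ss ! i)" "Ks ! i \<in> fst (Ss ! i)"
      using Ss Js Ks i unfolding pobjs_def by auto
    show "shrinking (Ks ! i) (Js ! i) (vs ! i)"
      using vs Js i unfolding pobjs_def shrinking_list_def by auto
  qed
  then obtain fs where fs: "length fs = length Ss" "\<forall>i<length Ss. (Ks ! i, Js ! i, fs ! i) \<in> snd (Ss ! i)"
    using Skolem_list_nth[where P = "\<lambda>i f. (Ks ! i, Js ! i, f) \<in> snd (Ss ! i)"] by blast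
  then have "shrinking_list Ks Js fs"
    by (rule nice_morphisms_shrinking_list[OF Ss Js Ks])
  moreover have "((Js, c), (Ks, precomp G g Ks fs c)) \<in> pgen Ss G g"
    unfolding pgen_iff using Js Ks c fs by (intro conjI exI[of _ fs]) simp_all
  ultimately show thesis
    by (rule that)
qed

lemma pgen_subset_Shr:
  assumes Ss: "\<forall>S\<in>set Ss. nice_subcat S"
  shows "pgen Ss G g \<subseteq> pgen (replicate (length Ss) Shr) G g"
proof
  fix p assume p: "p \<in> pgen Ss G g"
  obtain Js c Ks d where pe: "p = ((Js, c), (Ks, d))"
    by (metis prod.collapse)
  then obtain fs where "Js \<in> pobjs Ss" "Ks \<in> pobjs Ss" "c \<in> hset Js G g" "length fs = length Ss"
    "\<forall>i<length Ss. (Ks ! i, Js ! i, fs ! i) \<in> snd (Ss ! i)" "d = precomp G g Ks fs c"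
    using p[unfolded pe pgen_iff] by blast
  moreover from this have "shrinking_list Ks Js fs"
    by (intro nice_morphisms_shrinking_list[OF Ss])
  ultimately show "p \<in> pgen (replicate (length Ss) Shr) G g"
    unfolding pe pgen_Shr_iff pobjs_def by auto
qed

lemma prel_subset_Shr:
  assumes "\<forall>S\<in>set Ss. nice_subcat S"
  shows "prel Ss G g \<subseteq> prel (replicate (length Ss) Shr) G g"
  unfolding prel_def using pgen_subset_Shr[OF assms, of G g] by (intro rtrancl_mono) auto


text \<open>Equality in A_n is detected by agreement after precomposition to a common refinement.\<close>
definition joinable :: "'a digraph \<Rightarrow> 'a \<Rightarrow> interval list \<times> (nat list \<Rightarrow> 'a) set
    \<Rightarrow> interval list \<times> (nat list \<Rightarrow> 'a) set \<Rightarrow> bool" where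
  "joinable G g x y \<longleftrightarrow> (\<exists>Ks fs gs. shrinking_list Ks (fst x) fs \<and> shrinking_list Ks (fst y) gs
     \<and> precomp G g Ks fs (snd x) = precomp G g Ks gs (snd y))"

lemma precomp_eq_refine:
  assumes c1: "c1 \<in> hset Js1 G g" and c2: "c2 \<in> hset Js2 G g"
    and fs: "shrinking_list Ks Js1 fs" and gs: "shrinking_list Ks Js2 gs"
    and eq: "precomp G g Ks fs c1 = precomp G g Ks gs c2"
    and ws: "shrinking_list Ks' Ks ws"
    and fs': "shrinking_list Ks' Js1 fs'" and gs': "shrinking_list Ks' Js2 gs'"
  shows "precomp G g Ks' fs' c1 = precomp G g Ks' gs' c2"
proof -
  have "precomp G g Ks' fs' c1 = precomp G g Ks' (comp_list Ks' fs ws) c1"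
    using precomp_shrinking_indep[OF c1 fs' shrinking_list_comp[OF fs ws]] .
  also have "\<dots> = precomp G g Ks' ws (precomp G g Ks fs c1)"
    using precomp_precomp[OF c1 fs ws] by simp
  also have "\<dots> = precomp G g Ks' ws (precomp G g Ks gs c2)"
    by (simp only: eq)
  also have "\<dots> = precomp G g Ks' (comp_list Ks' gs ws) c2"
    using precomp_precomp[OF c2 gs ws] .
  also have "\<dots> = precomp G g Ks' gs' c2"
    using precomp_shrinking_indep[OF c2 shrinking_list_comp[OF gs ws] gs'] .
  finally show ?thesis .
qed

lemma joinable_refl: "x \<in> pcarrier Ss G g \<Longrightarrow> joinable G g x x"
  unfolding joinable_def using shrinking_list_id by blast

lemma joinable_sym: "joinable G g x y \<Longrightarrow> joinable G g y x"
  unfolding joinable_def by metis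

lemma joinable_trans:
  assumes x: "x \<in> pcarrier Ss G g" and y: "y \<in> pcarrier Ss G g" and z: "z \<in> pcarrier Ss G g"
    and xy: "joinable G g x y" and yz: "joinable G g y z"
  shows "joinable G g x z"
proof -
  obtain Ks1 fs1 gs1 where 1: "shrinking_list Ks1 (fst x) fs1" "shrinking_list Ks1 (fst y) gs1"
    "precomp G g Ks1 fs1 (snd x) = precomp G g Ks1 gs1 (snd y)"
    using xy unfolding joinable_def by blast
  obtain Ks2 fs2 gs2 where 2: "shrinking_list Ks2 (fst y) fs2" "shrinking_list Ks2 (fst z) gs2"
    "precomp G g Ks2 fs2 (snd y) = precomp G g Ks2 gs2 (snd z)"
    using yz unfolding joinable_def by blast
  have "length Ks1 = length Ks2"
    using 1(2) 2(1) unfolding shrinking_list_def by simp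
  then obtain Ks as bs where as: "shrinking_list Ks Ks1 as" and bs: "shrinking_list Ks Ks2 bs"
    by (rule shrinking_list_cospan)
  note hx = pcarrier_hset[OF x] and hy = pcarrier_hset[OF y] and hz = pcarrier_hset[OF z]
  have "precomp G g Ks (comp_list Ks fs1 as) (snd x) = precomp G g Ks (comp_list Ks fs2 bs) (snd y)"
    using precomp_eq_refine[OF hx hy 1 as shrinking_list_comp[OF 1(1) as] shrinking_list_comp[OF 2(1) bs]] .
  also have "\<dots> = precomp G g Ks (comp_list Ks gs2 bs) (snd z)"
    using precomp_eq_refine[OF hy hz 2 bs shrinking_list_comp[OF 2(1) bs] shrinking_list_comp[OF 2(2) bs]] .
  finally show ?thesis
    unfolding joinable_def using shrinking_list_comp[OF 1(1) as] shrinking_list_comp[OF 2(2) bs] by blast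
qed

lemma pgen_Shr_joinable:
  assumes "(x, y) \<in> pgen (replicate n Shr) G g"
  shows "joinable G g x y"
proof -
  obtain Js c Ks d where xy: "x = (Js, c)" "y = (Ks, d)"
    by (cases x, cases y)
  then obtain fs where c: "c \<in> hset Js G g" and fs: "shrinking_list Ks Js fs"
    and d: "d = precomp G g Ks fs c"
    using assms[unfolded xy pgen_Shr_iff] by blast
  let ?ids = "map (\<lambda>J. restrict id {0..length J}) Ks"
  have "precomp G g Ks ?ids d = precomp G g Ks (comp_list Ks fs ?ids) c"
    unfolding d by (rule precomp_precomp[OF c fs shrinking_list_id])
  also have "\<dots> = precomp G g Ks fs c"
    by (rule precomp_shrinking_indep[OF c shrinking_list_comp[OF fs shrinking_list_id] fs])
  finally have "precomp G g Ks fs c = precomp G g Ks ?ids d" ..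
  then show ?thesis
    unfolding joinable_def xy fst_conv snd_conv
    by (intro exI[of _ Ks] exI[of _ fs] exI[of _ ?ids] conjI fs shrinking_list_id)
qed

lemma prel_Shr_imp_joinable:
  assumes "(x, y) \<in> prel (replicate n Shr) G g" and x: "x \<in> pcarrier (replicate n Shr) G g"
  shows "joinable G g x y"
proof -
  from assms(1) have "y \<in> pcarrier (replicate n Shr) G g \<and> joinable G g x y"
    unfolding prel_def
  proof (induction rule: rtrancl_induct)
    case base
    show ?case
      using x joinable_refl[OF x] by simp
  next
    case (step z z')
    have "z' \<in> pcarrier (replicate n Shr) G g \<and> joinable G g z z'"
    proof (cases "(z, z') \<in> pgen (replicate n Shr) G g")
      case True
      show ?thesis
        using pgen_Shr_carrier(2)[OF True] pgen_Shr_joinable[OF True] by simp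
    next
      case False
      with step.hyps(2) have zz': "(z', z) \<in> pgen (replicate n Shr) G g"
        by blast
      show ?thesis
        using pgen_Shr_carrier(1)[OF zz'] joinable_sym[OF pgen_Shr_joinable[OF zz']] by simp
    qed
    then show ?case
      using joinable_trans[OF x, of z z'] step.IH by simp
  qed
  then show ?thesis ..
qed

lemma rtrancl_Un_converse_join:
  assumes "(a, c) \<in> E" and "(b, c) \<in> E"
  shows "(a, b) \<in> (E \<union> E\<inverse>)\<^sup>*"
proof -
  have "(a, c) \<in> E \<union> E\<inverse>" "(c, b) \<in> E \<union> E\<inverse>"
    using assms by auto
  then show ?thesis
    by (rule rtrancl_trans[OF r_into_rtrancl r_into_rtrancl])
qed

lemma joinable_imp_prel:
  assumes Ss: "\<forall>S\<in>set Ss. nice_subcat S" and x: "x \<in> pcarrier Ss G g" and y: "y \<in> pcarrier Ss G g"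
    and "joinable G g x y"
  shows "(x, y) \<in> prel Ss G g"
proof -
  obtain Js1 c1 Js2 c2 where xy: "x = (Js1, c1)" "y = (Js2, c2)"
    by (cases x, cases y)
  have Js1: "Js1 \<in> pobjs Ss" "c1 \<in> hset Js1 G g" and Js2: "Js2 \<in> pobjs Ss" "c2 \<in> hset Js2 G g"
    using x y unfolding xy pcarrier_def by auto
  obtain Ks fs gs where fs: "shrinking_list Ks Js1 fs" and gs: "shrinking_list Ks Js2 gs"
    and eq: "precomp G g Ks fs c1 = precomp G g Ks gs c2"
    using assms(4) unfolding xy joinable_def by auto
  have "length Ks = length Ss"
    using fs Js1 unfolding shrinking_list_def pobjs_def by simp
  then obtain Ks' ws where Ks': "Ks' \<in> pobjs Ss" and ws: "shrinking_list Ks' Ks ws"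
    by (rule nice_cover_list[OF Ss])
  obtain fs' where fs': "shrinking_list Ks' Js1 fs'"
    and e1: "((Js1, c1), (Ks', precomp G g Ks' fs' c1)) \<in> pgen Ss G g"
    using pgen_nice_edge[OF Ss Js1(1) Ks' shrinking_list_comp[OF fs ws] Js1(2)] .
  obtain gs' where gs': "shrinking_list Ks' Js2 gs'"
    and e2: "((Js2, c2), (Ks', precomp G g Ks' gs' c2)) \<in> pgen Ss G g"
    using pgen_nice_edge[OF Ss Js2(1) Ks' shrinking_list_comp[OF gs ws] Js2(2)] .
  have "precomp G g Ks' fs' c1 = precomp G g Ks' gs' c2"
    using precomp_eq_refine[OF Js1(2) Js2(2) fs gs eq ws fs' gs'] .
  with e1 e2 show ?thesis
    unfolding xy prel_def by (metis rtrancl_Un_converse_join)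
qed

lemma pgen_Shr_nice_cover:
  assumes Ss: "\<forall>S\<in>set Ss. nice_subcat S" and b: "b \<in> pcarrier (replicate (length Ss) Shr) G g"
  shows "\<exists>a\<in>pcarrier Ss G g. (b, a) \<in> pgen (replicate (length Ss) Shr) G g"
proof -
  obtain Js c where Js: "b = (Js, c)" "length Js = length Ss" and c: "c \<in> hset Js G g"
    using b by (cases b) (simp add: pcarrier_Shr_iff)
  obtain Ks fs where Ks: "Ks \<in> pobjs Ss" and fs: "shrinking_list Ks Js fs"
    using nice_cover_list[OF Ss Js(2)] .
  have "(Ks, precomp G g Ks fs c) \<in> pcarrier Ss G g"
    using Ks precomp_hset[OF c fs] unfolding pcarrier_def by simp
  moreover have "(b, (Ks, precomp G g Ks fs c)) \<in> pgen (replicate (length Ss) Shr) G g"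
    using c Js fs unfolding Js(1) pgen_Shr_iff by auto
  ultimately show ?thesis ..
qed

lemma bij_betw_pcan:
  assumes Ss: "\<forall>S\<in>set Ss. nice_subcat S"
  shows "bij_betw (pcan Ss G g) (pcolim Ss G g) (A (length Ss) G g)"
proof -
  let ?T = "replicate (length Ss) Shr"
  have "bij_betw (\<lambda>X. prel ?T G g `` (id ` X)) (pcarrier Ss G g // prel Ss G g)
      (pcarrier ?T G g // prel ?T G g)"
  proof (rule bij_betw_quotient_map[OF equiv_prel equiv_prel])
    show "(id x, id y) \<in> prel ?T G g" if "(x, y) \<in> prel Ss G g" for x y
      using prel_subset_Shr[OF Ss, of G g] that by auto
    show "(x, y) \<in> prel Ss G g"
      if "x \<in> pcarrier Ss G g" "y \<in> pcarrier Ss G g" "(id x, id y) \<in> prel ?T G g" for x y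
      using joinable_imp_prel[OF Ss that(1,2)] prel_Shr_imp_joinable[of x y "length Ss" G g] that
        pcarrier_subset_Shr[of Ss G g] by auto
    show "id ` pcarrier Ss G g \<subseteq> pcarrier ?T G g"
      using pcarrier_subset_Shr by simp
    show "\<exists>a\<in>pcarrier Ss G g. (b, id a) \<in> prel ?T G g" if "b \<in> pcarrier ?T G g" for b
      using pgen_Shr_nice_cover[OF Ss that] unfolding prel_def by auto
  qed
  then show ?thesis
    unfolding pcan_def pcolim_def A_def by simp
qed

lemma dgen_imp_pgen_Shr:
  assumes S: "nice_subcat S" and "(x, y) \<in> dgen S n G g"
  shows "((\<lambda>(J, c). (replicate n J, c)) x, (\<lambda>(J, c). (replicate n J, c)) y) \<in> pgen (replicate n Shr) G g"
proof -
  obtain J J' f c where xy: "x = (J, c)" "y = (J', precomp G g (replicate n J') (replicate n f) c)"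
    and f: "(J', J, f) \<in> snd S" and c: "c \<in> hset (replicate n J) G g"
    using assms(2) unfolding dgen_def by blast
  have "shrinking_list (replicate n J') (replicate n J) (replicate n f)"
    using shrinking_list_replicate[OF nice_subcat_shrinking[OF S f]] .
  with c show ?thesis
    unfolding xy prod.case pgen_Shr_iff by auto
qed

lemma dgen_closure_imp_prel_Shr:
  assumes S: "nice_subcat S" and "(x, y) \<in> (dgen S n G g \<union> (dgen S n G g)\<inverse>)\<^sup>*"
  shows "((\<lambda>(J, c). (replicate n J, c)) x, (\<lambda>(J, c). (replicate n J, c)) y) \<in> prel (replicate n Shr) G g"
  using assms(2) unfolding prel_def
proof (induction rule: rtrancl_induct)
  case (step y z)
  from step.hyps(2) have "((\<lambda>(J, c). (replicate n J, c)) y, (\<lambda>(J, c). (replicate n J, c)) z)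
      \<in> pgen (replicate n Shr) G g \<union> (pgen (replicate n Shr) G g)\<inverse>"
    using dgen_imp_pgen_Shr[OF S, of y z n G g] dgen_imp_pgen_Shr[OF S, of z y n G g] by blast
  with step.IH show ?case
    by (rule rtrancl_into_rtrancl)
qed simp

lemma joinable_imp_dgen_closure:
  assumes S: "nice_subcat S" and x: "(J1, c1) \<in> dcarrier S n G g" and y: "(J2, c2) \<in> dcarrier S n G g"
    and "joinable G g (replicate n J1, c1) (replicate n J2, c2)"
  shows "((J1, c1), (J2, c2)) \<in> (dgen S n G g \<union> (dgen S n G g)\<inverse>)\<^sup>*"
proof -
  have J1: "J1 \<in> fst S" "c1 \<in> hset (replicate n J1) G g" and J2: "J2 \<in> fst S" "c2 \<in> hset (replicate n J2) G g"
    using x y unfolding dcarrier_def by auto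
  obtain Ks fs gs where fs: "shrinking_list Ks (replicate n J1) fs" and gs: "shrinking_list Ks (replicate n J2) gs"
    and eq: "precomp G g Ks fs c1 = precomp G g Ks gs c2"
    using assms(4) unfolding joinable_def by auto
  obtain K where K: "K \<in> fst S" "\<forall>J\<in>set (J1 # J2 # Ks). \<exists>f. shrinking K J f"
    using nice_subcat_common_cover[OF S] by blast
  have "length Ks = n"
    using fs unfolding shrinking_list_def by simp
  then obtain ws where ws: "shrinking_list (replicate n K) Ks ws"
    using shrinking_list_replicateI[of Ks K] K(2) by auto
  obtain k1 k2 where "shrinking K J1 k1" "shrinking K J2 k2"
    using K(2) by auto
  then obtain m1 m2 where m1: "(K, J1, m1) \<in> snd S" and m2: "(K, J2, m2) \<in> snd S"
    using nice_subcat_morphism[OF S J1(1) K(1)] nice_subcat_morphism[OF S J2(1) K(1)] by blast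
  let ?d = "precomp G g (replicate n K) (replicate n m1) c1"
  have "?d = precomp G g (replicate n K) (replicate n m2) c2"
    using precomp_eq_refine[OF J1(2) J2(2) fs gs eq ws]
      shrinking_list_replicate[OF nice_subcat_shrinking[OF S m1]]
      shrinking_list_replicate[OF nice_subcat_shrinking[OF S m2]] by blast
  then have "((J1, c1), (K, ?d)) \<in> dgen S n G g" "((J2, c2), (K, ?d)) \<in> dgen S n G g"
    using J1 J2 K(1) m1 m2 unfolding dgen_def by blast+
  then show ?thesis
    by (rule rtrancl_Un_converse_join)
qed

lemma pgen_Shr_diagonal_cover:
  assumes S: "nice_subcat S" and b: "b \<in> pcarrier (replicate n Shr) G g"
  shows "\<exists>a\<in>dcarrier S n G g. (b, (\<lambda>(J, c). (replicate n J, c)) a) \<in> pgen (replicate n Shr) G g"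
proof -
  obtain Js c where Js: "b = (Js, c)" "length Js = n" and c: "c \<in> hset Js G g"
    using b by (cases b) (simp add: pcarrier_Shr_iff)
  obtain K where K: "K \<in> fst S" "\<forall>J\<in>set Js. \<exists>f. shrinking K J f"
    using nice_subcat_common_cover[OF S] by blast
  then obtain fs where fs: "shrinking_list (replicate n K) Js fs"
    using shrinking_list_replicateI[of Js K] Js by auto
  have "(K, precomp G g (replicate n K) fs c) \<in> dcarrier S n G g"
    using K(1) precomp_hset[OF c fs] unfolding dcarrier_def by simp
  moreover have "(b, (replicate n K, precomp G g (replicate n K) fs c)) \<in> pgen (replicate n Shr) G g"
    using c Js fs unfolding Js(1) pgen_Shr_iff by auto
  ultimately show ?thesis
    by (intro bexI[of _ "(K, precomp G g (replicate n K) fs c)"]) auto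
qed

lemma bij_betw_dcan:
  assumes S: "nice_subcat S"
  shows "bij_betw (dcan n G g) (dcolim S n G g) (A n G g)"
proof -
  let ?T = "replicate n Shr" and ?h = "\<lambda>(J, c). (replicate n J, c)"
  have "bij_betw (\<lambda>X. prel ?T G g `` (?h ` X)) (dcarrier S n G g // (dgen S n G g \<union> (dgen S n G g)\<inverse>)\<^sup>*)
      (pcarrier ?T G g // prel ?T G g)"
  proof (rule bij_betw_quotient_map[OF equiv_rtrancl[OF sym_Un_converse] equiv_prel])
    show "(?h x, ?h y) \<in> prel ?T G g" if "(x, y) \<in> (dgen S n G g \<union> (dgen S n G g)\<inverse>)\<^sup>*" for x y
      using dgen_closure_imp_prel_Shr[OF S that] .
    show "(x, y) \<in> (dgen S n G g \<union> (dgen S n G g)\<inverse>)\<^sup>*"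
      if "x \<in> dcarrier S n G g" "y \<in> dcarrier S n G g" "(?h x, ?h y) \<in> prel ?T G g" for x y
    proof -
      obtain J1 c1 J2 c2 where xy: "x = (J1, c1)" "y = (J2, c2)"
        by (cases x, cases y)
      have "(replicate n J1, c1) \<in> pcarrier ?T G g"
        using that(1) unfolding xy dcarrier_def by (simp add: pcarrier_Shr_iff)
      with that(3) have "joinable G g (replicate n J1, c1) (replicate n J2, c2)"
        unfolding xy prod.case by (rule prel_Shr_imp_joinable)
      then show ?thesis
        unfolding xy by (rule joinable_imp_dgen_closure[OF S that(1,2)[unfolded xy]])
    qed
    show "?h ` dcarrier S n G g \<subseteq> pcarrier ?T G g"
      unfolding dcarrier_def by (auto simp: pcarrier_Shr_iff)
    show "\<exists>a\<in>dcarrier S n G g. (b, ?h a) \<in> prel ?T G g" if "b \<in> pcarrier ?T G g" for b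
      using pgen_Shr_diagonal_cover[OF S that] unfolding prel_def by blast
  qed
  then show ?thesis
    unfolding dcan_def dcolim_def A_def pcolim_def by simp
qed

theorem mainTheorem8:
  fixes G :: "'a digraph" and g :: 'a and n :: nat
  assumes "is_digraph G" and "g \<in> fst G"
  shows "(\<forall>Ss. length Ss = n \<and> (\<forall>S\<in>set Ss. nice_subcat S)
            \<longrightarrow> bij_betw (pcan Ss G g) (pcolim Ss G g) (A n G g))
       \<and> (\<forall>S. nice_subcat S \<longrightarrow> bij_betw (dcan n G g) (dcolim S n G g) (A n G g))"
proof (intro conjI allI impI)
  fix Ss assume "length Ss = n \<and> (\<forall>S\<in>set Ss. nice_subcat S)"
  then show "bij_betw (pcan Ss G g) (pcolim Ss G g) (A n G g)"
    using bij_betw_pcan[of Ss G g] by blast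
next
  fix S assume "nice_subcat S"
  then show "bij_betw (dcan n G g) (dcolim S n G g) (A n G g)"
    by (rule bij_betw_dcan)
qed

end
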